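(* Let $\mathbb{O}(P)$ be the limit of order ideals associated with an inverse system $\langle\{P_n\},\{p^n_k\}_{k<n}\rangle$ of nonempty finite posets with quotient maps. Then $\mathbb{O}(P)$ is $\sigma$-complete: every countable subset of $\mathbb{O}(P)$ has a supremum and an infimum in $\mathbb{O}(P)$.
   Context: A quotient map between posets is a surjective order-preserving map $\phi:A\to B$ such that for all $a\le b$ in $B$ there are $x\le y$ in $A$ with $\phi(x)=a,\phi(y)=b$. The inverse system: nonempty finite posets $P_n$, quotient maps $p^m_k:P_m\to P_k$ ($k<m$) with $p^k_l\circ p^m_k=p^m_l$. $\mathcal{O}(P_n)$ is the set of down-sets of $P_n$ under inclusion; for a quotient map $p:Q\to R$ of finite posets, $\hat p(\emptyset)=\emptyset$ and $\hat p(A)=\bigcup_i\downarrow p(a_i)$ over the maximal elements $a_i$ of $A$, where $\downarrow x=\{m:m\le x\}$. $\mathbb{O}(P):=\{(A_n)\in\prod_n\mathcal{O}(P_n):\widehat{p^{n+1}_n}(A_{n+1})=A_n\ \forall n\}$, ordered coordinatewise by inclusion. *)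

theory Defs
  imports Main "HOL-Library.Countable_Set"
begin

definition poset_on :: "'a set \<Rightarrow> ('a \<Rightarrow> 'a \<Rightarrow> bool) \<Rightarrow> bool" where
  "poset_on X le \<longleftrightarrow>
     (\<forall>x\<in>X. le x x) \<and>
     (\<forall>x\<in>X. \<forall>y\<in>X. le x y \<and> le y x \<longrightarrow> x = y) \<and>
     (\<forall>x\<in>X. \<forall>y\<in>X. \<forall>z\<in>X. le x y \<and> le y z \<longrightarrow> le x z)"

definition quotient_map ::
  "'a set \<Rightarrow> ('a \<Rightarrow> 'a \<Rightarrow> bool) \<Rightarrow> 'b set \<Rightarrow> ('b \<Rightarrow> 'b \<Rightarrow> bool) \<Rightarrow> ('a \<Rightarrow> 'b) \<Rightarrow> bool" where
  "quotient_map A leA B leB f \<longleftrightarrow>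
     f ` A = B \<and>
     (\<forall>x\<in>A. \<forall>y\<in>A. leA x y \<longrightarrow> leB (f x) (f y)) \<and>
     (\<forall>a\<in>B. \<forall>b\<in>B. leB a b \<longrightarrow> (\<exists>x\<in>A. \<exists>y\<in>A. leA x y \<and> f x = a \<and> f y = b))"

definition down_sets :: "'a set \<Rightarrow> ('a \<Rightarrow> 'a \<Rightarrow> bool) \<Rightarrow> 'a set set" where
  "down_sets X le = {A. A \<subseteq> X \<and> (\<forall>a\<in>A. \<forall>b\<in>X. le b a \<longrightarrow> b \<in> A)}"

definition down_of :: "'a set \<Rightarrow> ('a \<Rightarrow> 'a \<Rightarrow> bool) \<Rightarrow> 'a \<Rightarrow> 'a set" where
  "down_of X le x = {m \<in> X. le m x}"

definition maximal_elems :: "('a \<Rightarrow> 'a \<Rightarrow> bool) \<Rightarrow> 'a set \<Rightarrow> 'a set" where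
  "maximal_elems le A = {a \<in> A. \<forall>b\<in>A. le a b \<longrightarrow> b = a}"

definition hat_map :: "('a \<Rightarrow> 'a \<Rightarrow> bool) \<Rightarrow> 'b set \<Rightarrow> ('b \<Rightarrow> 'b \<Rightarrow> bool) \<Rightarrow> ('a \<Rightarrow> 'b) \<Rightarrow> 'a set \<Rightarrow> 'b set" where
  "hat_map leQ R leR p A =
     (if A = {} then {} else (\<Union>a\<in>maximal_elems leQ A. down_of R leR (p a)))"

definition inverse_system ::
  "(nat \<Rightarrow> 'a set) \<Rightarrow> (nat \<Rightarrow> 'a \<Rightarrow> 'a \<Rightarrow> bool) \<Rightarrow> (nat \<Rightarrow> nat \<Rightarrow> 'a \<Rightarrow> 'a) \<Rightarrow> bool" where
  "inverse_system P le p \<longleftrightarrow>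
     (\<forall>n. finite (P n) \<and> P n \<noteq> {} \<and> poset_on (P n) (le n)) \<and>
     (\<forall>k m. k < m \<longrightarrow> quotient_map (P m) (le m) (P k) (le k) (p m k)) \<and>
     (\<forall>l k m. l < k \<longrightarrow> k < m \<longrightarrow> (\<forall>x\<in>P m. p k l (p m k x) = p m l x))"

text \<open>The limit \<open>\<bbbO>(P)\<close>; ordered coordinatewise by inclusion, i.e. the
  pointwise order \<open>\<le>\<close> on \<open>nat \<Rightarrow> 'a set\<close>.\<close>

definition limit_ideals :: "(nat \<Rightarrow> 'a set) \<Rightarrow> (nat \<Rightarrow> 'a \<Rightarrow> 'a \<Rightarrow> bool) \<Rightarrow> (nat \<Rightarrow> nat \<Rightarrow> 'a \<Rightarrow> 'a) \<Rightarrow> (nat \<Rightarrow> 'a set) set" where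
  "limit_ideals P le p = {A. (\<forall>n. A n \<in> down_sets (P n) (le n)) \<and>
                   (\<forall>n. hat_map (le (Suc n)) (P n) (le n) (p (Suc n) n) (A (Suc n)) = A n)}"

definition is_sup_in :: "'b::order set \<Rightarrow> 'b set \<Rightarrow> 'b \<Rightarrow> bool" where
  "is_sup_in L S s \<longleftrightarrow> s \<in> L \<and> (\<forall>x\<in>S. x \<le> s) \<and> (\<forall>u\<in>L. (\<forall>x\<in>S. x \<le> u) \<longrightarrow> s \<le> u)"

definition is_inf_in :: "'b::order set \<Rightarrow> 'b set \<Rightarrow> 'b \<Rightarrow> bool" where
  "is_inf_in L S s \<longleftrightarrow> s \<in> L \<and> (\<forall>x\<in>S. s \<le> x) \<and> (\<forall>u\<in>L. (\<forall>x\<in>S. u \<le> x) \<longrightarrow> u \<le> s)"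

end

theory Submission
  imports Defs
begin

text \<open>For a down-set \<open>A\<close>, \<open>\<hat>p(A)\<close> is just the down-closure of the image \<open>p(A)\<close>, since every
  element of a finite poset lies below a maximal one. Down-closure of images commutes with
  arbitrary unions, so \<open>\<bbbO>(P)\<close> is closed under arbitrary coordinatewise unions. A subset of a
  complete lattice closed under all joins is itself a complete lattice (the meet of \<open>S\<close> is the
  join of its lower bounds), so \<open>\<bbbO>(P)\<close> even has suprema and infima of arbitrary subsets.\<close>

lemma finite_poset_maximal_above:
  assumes po: "poset_on X le" and fin: "finite X" and AX: "A \<subseteq> X" and a: "a \<in> A"
  shows "\<exists>b\<in>maximal_elems le A. le a b"
proof -
  define up where "up b = {c\<in>A. le b c}" for b
  \<comment> \<open>an element above \<open>a\<close> with the fewest elements above it is maximal\<close>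
  have "le a a" using po a AX unfolding poset_on_def by blast
  then obtain b where b: "b \<in> A" "le a b"
    and b_least: "\<And>y. y \<in> A \<Longrightarrow> le a y \<Longrightarrow> card (up b) \<le> card (up y)"
    using ex_has_least_nat[of "\<lambda>b. b \<in> A \<and> le a b" a "\<lambda>b. card (up b)"] a
    by (metis (no_types, lifting))
  have "b \<in> maximal_elems le A"
    unfolding maximal_elems_def
  proof (intro CollectI conjI ballI impI)
    fix c assume c: "c \<in> A" "le b c"
    have "up c \<subseteq> up b" unfolding up_def using po c b AX unfolding poset_on_def by blast
    moreover have "card (up b) \<le> card (up c)"
      using b_least c po b AX a unfolding poset_on_def by blast
    moreover have "finite (up b)" unfolding up_def using finite_subset[OF AX fin] by simp
    ultimately have "up c = up b" using card_seteq by blast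
    moreover have "b \<in> up b" unfolding up_def using b po AX unfolding poset_on_def by blast
    ultimately have "le c b" unfolding up_def by blast
    then show "c = b" using c po AX b unfolding poset_on_def by blast
  qed (use b in simp)
  then show ?thesis using b by blast
qed

lemma UN_down_sets:
  assumes "\<And>i. i \<in> I \<Longrightarrow> A i \<in> down_sets X le"
  shows "(\<Union>i\<in>I. A i) \<in> down_sets X le"
  using assms unfolding down_sets_def by blast

definition down_closure :: "'b set \<Rightarrow> ('b \<Rightarrow> 'b \<Rightarrow> bool) \<Rightarrow> 'b set \<Rightarrow> 'b set" where
  "down_closure R leR B = {y \<in> R. \<exists>b\<in>B. leR y b}"

lemma down_closure_UNION: "down_closure R leR (\<Union>i\<in>I. B i) = (\<Union>i\<in>I. down_closure R leR (B i))"
  unfolding down_closure_def by blast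

lemma hat_map_eq_down_closure_image:
  assumes "poset_on Q leQ" "finite Q" "poset_on R leR"
    and mono: "\<forall>x\<in>Q. \<forall>y\<in>Q. leQ x y \<longrightarrow> leR (p x) (p y)" and into: "p ` Q \<subseteq> R"
    and AQ: "A \<subseteq> Q"
  shows "hat_map leQ R leR p A = down_closure R leR (p ` A)"
proof (cases "A = {}")
  case True
  then show ?thesis by (simp add: hat_map_def down_closure_def)
next
  case False
  have "y \<in> hat_map leQ R leR p A" if y: "y \<in> R" "a \<in> A" "leR y (p a)" for y a
  proof -
    obtain b where b: "b \<in> maximal_elems leQ A" "leQ a b"
      using finite_poset_maximal_above[OF assms(1,2) AQ y(2)] by blast
    have "b \<in> A" using b(1) unfolding maximal_elems_def by blast
    have "leR (p a) (p b)" using mono AQ y(2) b(2) \<open>b \<in> A\<close> by blast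
    moreover have "p a \<in> R" "p b \<in> R" using into AQ y(2) \<open>b \<in> A\<close> by blast+
    ultimately have "leR y (p b)" using assms(3) y unfolding poset_on_def by blast
    then show ?thesis using False b(1) y(1) unfolding hat_map_def down_of_def by auto
  qed
  then show ?thesis
    using False unfolding hat_map_def down_of_def maximal_elems_def down_closure_def by auto
qed

lemma hat_map_Suc_eq_down_closure_image:
  assumes "inverse_system P le p" "A \<subseteq> P (Suc n)"
  shows "hat_map (le (Suc n)) (P n) (le n) (p (Suc n) n) A
       = down_closure (P n) (le n) (p (Suc n) n ` A)"
  using assms by (intro hat_map_eq_down_closure_image)
    (auto simp: inverse_system_def quotient_map_def)

lemma Sup_limit_ideals:
  assumes sys: "inverse_system P le p" and F: "F \<subseteq> limit_ideals P le p"
  shows "Sup F \<in> limit_ideals P le p"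
proof -
  have ds: "Sup F n \<in> down_sets (P n) (le n)" for n
    using F unfolding Sup_apply limit_ideals_def by (intro UN_down_sets) blast
  have sub: "C (Suc n) \<subseteq> P (Suc n)" if "C \<in> F" for C n
    using F that unfolding limit_ideals_def down_sets_def by blast
  have "hat_map (le (Suc n)) (P n) (le n) (p (Suc n) n) (Sup F (Suc n)) = Sup F n" for n
  proof -
    have "hat_map (le (Suc n)) (P n) (le n) (p (Suc n) n) (Sup F (Suc n))
        = down_closure (P n) (le n) (p (Suc n) n ` (\<Union>C\<in>F. C (Suc n)))"
      unfolding Sup_apply using hat_map_Suc_eq_down_closure_image[OF sys UN_least[OF sub]] .
    also have "\<dots> = (\<Union>C\<in>F. down_closure (P n) (le n) (p (Suc n) n ` C (Suc n)))"
      unfolding image_UN down_closure_UNION ..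
    also have "\<dots> = (\<Union>C\<in>F. hat_map (le (Suc n)) (P n) (le n) (p (Suc n) n) (C (Suc n)))"
      using hat_map_Suc_eq_down_closure_image[OF sys sub] by simp
    also have "\<dots> = Sup F n"
      using F unfolding limit_ideals_def Sup_apply by (intro SUP_cong) auto
    finally show ?thesis .
  qed
  then show ?thesis using ds unfolding limit_ideals_def by blast
qed

lemma
  fixes L :: "'b::complete_lattice set"
  assumes Sup_closed: "\<And>F. F \<subseteq> L \<Longrightarrow> Sup F \<in> L" and S: "S \<subseteq> L"
  shows is_sup_in_Sup_closed: "is_sup_in L S (Sup S)"
    and is_inf_in_Sup_closed: "is_inf_in L S (Sup {u\<in>L. \<forall>x\<in>S. u \<le> x})"
  using Sup_closed[of S] Sup_closed[of "{u\<in>L. \<forall>x\<in>S. u \<le> x}"] S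
  unfolding is_sup_in_def is_inf_in_def
  by (auto intro: Sup_upper Sup_least)

theorem mainTheorem16:
  fixes P :: "nat \<Rightarrow> 'a set" and le :: "nat \<Rightarrow> 'a \<Rightarrow> 'a \<Rightarrow> bool"
    and p :: "nat \<Rightarrow> nat \<Rightarrow> 'a \<Rightarrow> 'a"
  assumes "inverse_system P le p"
  shows "\<forall>S. S \<subseteq> limit_ideals P le p \<and> countable S \<longrightarrow>
           (\<exists>s. is_sup_in (limit_ideals P le p) S s) \<and> (\<exists>i. is_inf_in (limit_ideals P le p) S i)"
  using is_sup_in_Sup_closed is_inf_in_Sup_closed Sup_limit_ideals[OF assms] by blast

end
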